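(* Let $g,h$ be distinct formal letters (with $g\not\equiv h$, i.e. $h\ne g,g^{-1}$). For all $n\ge1$, the iterated commutator word $[g,h]_n$ contains none of the square words in $g$ and $h$ as a cyclic subword.
   Context: Iterated commutator words in the free group on $g,h$: $[g,h]_1:=gh^{-1}g^{-1}h$, and for $n\ge 2$, $[g,h]_n$ is the reduced form of $g\,[g,h]_{n-1}^{-1}\,g^{-1}\,[g,h]_{n-1}$. A cyclic permutation of a word $a_1\cdots a_n$ is a word $a_k\cdots a_na_1\cdots a_{k-1}$ for some $k\in[n]$. A word $u$ is a cyclic subword of $w$ if $u$ or $u^{-1}$ is a contiguous subword of some cyclic permutation of $w$. The square words in $g$ and $h$ are the words obtained from $ghgh$ and $gh^{-1}gh^{-1}$ by cyclic permutations and inversions, namely $ghgh$, $hghg$, $h^{-1}g^{-1}h^{-1}g^{-1}$, $g^{-1}h^{-1}g^{-1}h^{-1}$, $gh^{-1}gh^{-1}$, $h^{-1}gh^{-1}g$, $hg^{-1}hg^{-1}$, $g^{-1}hg^{-1}h$. *)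

theory Defs
  imports Main "HOL-Library.Sublist"
begin

text \<open>Words in the free group on letters of type 'a: a letter is a pair (x, e)
  with e = False meaning x and e = True meaning x^-1.\<close>

type_synonym 'a letter = "'a \<times> bool"

definition inv_letter :: "'a letter \<Rightarrow> 'a letter" where
  "inv_letter l = (fst l, \<not> snd l)"

definition inv_word :: "'a letter list \<Rightarrow> 'a letter list" where
  "inv_word w = rev (map inv_letter w)"

definition reduce_word :: "'a letter list \<Rightarrow> 'a letter list" where
  "reduce_word w = foldr (\<lambda>x acc. case acc of [] \<Rightarrow> [x]
        | y # ys \<Rightarrow> (if y = inv_letter x then ys else x # acc)) w []"

definition gen :: "'a \<Rightarrow> 'a letter" where "gen x = (x, False)"
definition ginv :: "'a \<Rightarrow> 'a letter" where "ginv x = (x, True)"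

fun iter_comm :: "'a \<Rightarrow> 'a \<Rightarrow> nat \<Rightarrow> 'a letter list" where
  "iter_comm g h 0 = []"
| "iter_comm g h (Suc 0) = [gen g, ginv h, ginv g, gen h]"
| "iter_comm g h (Suc (Suc n)) =
     reduce_word ([gen g] @ inv_word (iter_comm g h (Suc n)) @ [ginv g] @ iter_comm g h (Suc n))"

definition cyclic_perms :: "'b list \<Rightarrow> 'b list set" where
  "cyclic_perms w = {rotate k w | k. k < length w}"

definition cyclic_subword :: "'a letter list \<Rightarrow> 'a letter list \<Rightarrow> bool" where
  "cyclic_subword u w \<longleftrightarrow>
     (\<exists>v \<in> cyclic_perms w. sublist u v \<or> sublist (inv_word u) v)"

definition square_words :: "'a \<Rightarrow> 'a \<Rightarrow> 'a letter list set" where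
  "square_words g h =
    {[gen g, gen h, gen g, gen h], [gen h, gen g, gen h, gen g],
     [ginv h, ginv g, ginv h, ginv g], [ginv g, ginv h, ginv g, ginv h],
     [gen g, ginv h, gen g, ginv h], [ginv h, gen g, ginv h, gen g],
     [gen h, ginv g, gen h, ginv g], [ginv g, gen h, ginv g, gen h]}"

end

theory Submission
  imports Defs
begin

text \<open>Write [g,h]_n = g t. Since t begins with h^-1, the middle pair g^-1 g in
  g [g,h]_n^-1 g^-1 [g,h]_n is the only cancellation, so [g,h]_(n+1) = g t^-1 g^-1 t, and by
  induction [g,h]_n = g h^-1 g h ... g^-1 h^-1 g^-1 h for n >= 2. A square word has length 4,
  so an occurrence in a concatenation lies in one factor or in the window formed by the three
  letters on either side of the junction; these windows are known explicitly and contain no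
  square. Inversion permutes the square words, so t^-1 inherits square-freeness from t. A
  cyclic subword of length 4 of w is a subword of w followed by its first three letters, which
  is one more junction.\<close>

lemma sublist_append_window:
  assumes "length u \<le> Suc n" and "sublist u (xs @ ys)"
  shows "sublist u xs \<or> sublist u ys \<or> sublist u (drop (length xs - n) xs @ take n ys)"
proof -
  consider "sublist u xs" | "sublist u ys"
    | u1 u2 where "u = u1 @ u2" "suffix u1 xs" "prefix u2 ys"
    using assms(2) unfolding sublist_append by blast
  then show ?thesis
  proof cases
    case 3
    show ?thesis
    proof (cases "u1 = [] \<or> u2 = []")
      case True
      with 3 show ?thesis by (auto intro: prefix_imp_sublist suffix_imp_sublist)
    next
      case False
      then have "length u1 > 0" "length u2 > 0" by auto
      moreover have "length u1 + length u2 \<le> Suc n" using 3(1) assms(1) by simp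
      ultimately have "length u1 \<le> n" "length u2 \<le> n" by linarith+
      with 3 have "suffix u1 (drop (length xs - n) xs)" "prefix u2 (take n ys)"
        by (auto intro!: suffix_length_suffix[OF 3(2) suffix_drop]
            prefix_length_prefix[OF 3(3) take_is_prefix] dest: suffix_length_le prefix_length_le)
      with 3 show ?thesis by (auto simp: sublist_append)
    qed
  qed auto
qed

lemma sublist_rotate:
  assumes "sublist u (rotate k w)"
  shows "sublist u (w @ take (length u - 1) w)"
proof -
  define j where "j = k mod length w"
  define n where "n = length u - 1"
  have "length u \<le> Suc n" unfolding n_def by simp
  moreover have "sublist u (drop j w @ take j w)"
    using assms unfolding j_def by (simp add: rotate_drop_take)
  ultimately consider "sublist u (drop j w)" | "sublist u (take j w)"
    | "sublist u (drop (length (drop j w) - n) (drop j w) @ take n (take j w))"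
    using sublist_append_window by blast
  then have "sublist u w \<or> sublist u (w @ take n w)"
  proof cases
    case 3
    have "suffix (drop (length (drop j w) - n) (drop j w)) w"
      by (metis suffix_drop drop_drop)
    moreover have "prefix (take n (take j w)) (take n w)"
      by (metis take_is_prefix take_take min.commute)
    ultimately show ?thesis using 3
      by (metis sublist_append sublist_order.order_trans)
  qed (use sublist_order.order_trans sublist_drop sublist_take in blast)+
  then show ?thesis unfolding n_def by (metis sublist_append)
qed

lemma inv_letter_inv_letter [simp]: "inv_letter (inv_letter x) = x"
  by (simp add: inv_letter_def)

lemma inv_letter_gen [simp]: "inv_letter (gen x) = ginv x"
  and inv_letter_ginv [simp]: "inv_letter (ginv x) = gen x"
  by (simp_all add: inv_letter_def gen_def ginv_def)

lemma gen_neq_ginv [simp]: "gen x \<noteq> ginv y" "ginv x \<noteq> gen y"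
  and gen_inject [simp]: "gen x = gen y \<longleftrightarrow> x = y"
  and ginv_inject [simp]: "ginv x = ginv y \<longleftrightarrow> x = y"
  by (simp_all add: gen_def ginv_def)

lemma inv_word_Nil [simp]: "inv_word [] = []"
  and inv_word_Cons [simp]: "inv_word (x # w) = inv_word w @ [inv_letter x]"
  and inv_word_append [simp]: "inv_word (v @ w) = inv_word w @ inv_word v"
  by (simp_all add: inv_word_def)

lemma inv_word_inv_word [simp]: "inv_word (inv_word w) = w"
  by (simp add: inv_word_def rev_map comp_def)

lemma sublist_inv_word: "sublist u w \<Longrightarrow> sublist (inv_word u) (inv_word w)"
  unfolding inv_word_def by (simp add: map_mono_sublist)

definition reduced :: "'a letter list \<Rightarrow> bool" where
  "reduced w \<longleftrightarrow> successively (\<lambda>x y. y \<noteq> inv_letter x) w"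

definition cancel_step :: "'a letter \<Rightarrow> 'a letter list \<Rightarrow> 'a letter list" where
  "cancel_step x w = (case w of [] \<Rightarrow> [x] | y # ys \<Rightarrow> if y = inv_letter x then ys else x # w)"

lemma reduce_word_Nil [simp]: "reduce_word [] = []"
  and reduce_word_Cons: "reduce_word (x # w) = cancel_step x (reduce_word w)"
  by (simp_all add: reduce_word_def cancel_step_def)

lemma reduced_Cons_iff: "reduced (x # w) \<longleftrightarrow> reduced w \<and> (w = [] \<or> hd w \<noteq> inv_letter x)"
  by (auto simp: reduced_def successively_Cons)

lemma reduced_append_iff:
  "reduced (v @ w) \<longleftrightarrow> reduced v \<and> reduced w \<and> (v = [] \<or> w = [] \<or> hd w \<noteq> inv_letter (last v))"
  by (auto simp: reduced_def successively_append_iff)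

lemma reduced_inv_word: "reduced w \<Longrightarrow> reduced (inv_word w)"
  unfolding reduced_def inv_word_def successively_rev successively_map
  by (erule successively_mono) (auto simp: inv_letter_def)

lemma reduced_cancel_step: "reduced w \<Longrightarrow> reduced (cancel_step x w)"
  by (auto simp: cancel_step_def reduced_def successively_Cons split: list.split)

lemma reduced_reduce_word: "reduced (reduce_word w)"
  by (induction w) (simp_all add: reduced_def[of "[]"] reduce_word_Cons reduced_cancel_step)

lemma reduce_word_reduced: "reduced w \<Longrightarrow> reduce_word w = w"
proof (induction w)
  case (Cons x w)
  then have "reduce_word w = w" by (simp add: reduced_Cons_iff)
  with Cons.prems show ?case
    by (cases w) (simp_all add: reduce_word_Cons cancel_step_def reduced_def)
qed simp

lemma cancel_step_inv_letter:
  "reduced w \<Longrightarrow> cancel_step (inv_letter x) (cancel_step x w) = w"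
  by (auto simp: cancel_step_def reduced_def split: list.split)

lemma reduce_word_cancel:
  "reduce_word (v @ inv_letter x # x # w) = reduce_word (v @ w)"
  by (induction v)
    (simp_all add: reduce_word_Cons cancel_step_inv_letter reduced_reduce_word)

lemma length_square_words: "u \<in> square_words g h \<Longrightarrow> length u = 4"
  by (auto simp: square_words_def)

lemma inv_word_square_words: "u \<in> square_words g h \<Longrightarrow> inv_word u \<in> square_words g h"
  by (auto simp: square_words_def)

definition square_free :: "'a \<Rightarrow> 'a \<Rightarrow> 'a letter list \<Rightarrow> bool" where
  "square_free g h w \<longleftrightarrow> (\<forall>u \<in> square_words g h. \<not> sublist u w)"

lemma square_free_if_length_less: "length w < 4 \<Longrightarrow> square_free g h w"
  unfolding square_free_def by (metis length_square_words sublist_length_le not_le)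

lemma square_free_sublist: "square_free g h w \<Longrightarrow> sublist v w \<Longrightarrow> square_free g h v"
  unfolding square_free_def by (meson sublist_order.order_trans)

lemma square_free_inv_word: "square_free g h w \<Longrightarrow> square_free g h (inv_word w)"
  unfolding square_free_def by (metis inv_word_inv_word inv_word_square_words sublist_inv_word)

lemma square_free_append:
  assumes "square_free g h v" and "square_free g h w"
    and "square_free g h (drop (length v - 3) v @ take 3 w)"
  shows "square_free g h (v @ w)"
proof (unfold square_free_def, intro ballI notI)
  fix u assume u: "u \<in> square_words g h" "sublist u (v @ w)"
  moreover from u have "length u \<le> Suc 3" by (simp add: length_square_words)
  ultimately show False
    using assms sublist_append_window unfolding square_free_def by blast
qed

lemma not_cyclic_subword_if_square_free:
  assumes "square_free g h (w @ take 3 w)" and "u \<in> square_words g h"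
  shows "\<not> cyclic_subword u w"
proof
  assume "cyclic_subword u w"
  then obtain k v where "v \<in> {u, inv_word u}" "sublist v (rotate k w)"
    unfolding cyclic_subword_def cyclic_perms_def by blast
  moreover from this assms(2) have "v \<in> square_words g h" "length v - 1 = 3"
    using inv_word_square_words length_square_words by force+
  ultimately show False
    using assms(1) sublist_rotate unfolding square_free_def by metis
qed

lemma iter_comm_Suc_Suc_eq:
  assumes w: "iter_comm g h (Suc n) = gen g # t"
    and red: "reduced (gen g # inv_word t @ ginv g # t)"
  shows "iter_comm g h (Suc (Suc n)) = gen g # inv_word t @ ginv g # t"
proof -
  have "iter_comm g h (Suc (Suc n))
      = reduce_word ((gen g # inv_word t @ [ginv g]) @ inv_letter (gen g) # gen g # t)"
    by (simp add: w)
  also have "\<dots> = gen g # inv_word t @ ginv g # t"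
    using reduce_word_cancel[of "gen g # inv_word t @ [ginv g]" "gen g" t]
      reduce_word_reduced[OF red] by simp
  finally show ?thesis .
qed

lemma iter_comm_Suc_Suc_shape:
  assumes gh: "g \<noteq> h"
  shows "\<exists>m. iter_comm g h (Suc (Suc k))
      = [gen g, ginv h, gen g, gen h] @ m @ [ginv g, ginv h, ginv g, gen h]
    \<and> reduced (iter_comm g h (Suc (Suc k))) \<and> square_free g h (iter_comm g h (Suc (Suc k)))"
proof (induction k)
  case 0
  have red: "reduced [gen g, ginv h, gen g, gen h, ginv g, ginv h, ginv g, gen h]"
    using gh by (simp add: reduced_def)
  then have "iter_comm g h (Suc (Suc 0))
      = gen g # inv_word [ginv h, ginv g, gen h] @ ginv g # [ginv h, ginv g, gen h]"
    by (intro iter_comm_Suc_Suc_eq) simp_all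
  with red gh show ?case
    by (auto simp: square_free_def square_words_def sublist_Cons_right)
next
  case (Suc k)
  then obtain m where w: "iter_comm g h (Suc (Suc k))
      = [gen g, ginv h, gen g, gen h] @ m @ [ginv g, ginv h, ginv g, gen h]"
    and red: "reduced (iter_comm g h (Suc (Suc k)))"
    and sf: "square_free g h (iter_comm g h (Suc (Suc k)))" by blast
  define t where "t = [ginv h, gen g, gen h] @ m @ [ginv g, ginv h, ginv g, gen h]"
  have wt: "iter_comm g h (Suc (Suc k)) = gen g # t" by (simp only: w t_def append_Cons)
  have red_t: "reduced (gen g # t)" and sf_t: "square_free g h (gen g # t)"
    using red sf by (simp_all only: wt)
  have inv_t: "inv_word t = [ginv h, gen g, gen h, gen g] @ inv_word m @ [ginv h, ginv g, gen h]"
    by (simp add: t_def)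
  have red': "reduced (gen g # inv_word t @ ginv g # t)"
  proof -
    have "reduced t" using red_t by (simp add: reduced_Cons_iff)
    moreover have "t \<noteq> []" "hd t = ginv h" by (simp_all add: t_def)
    moreover have "inv_word t \<noteq> []" "hd (inv_word t) = ginv h" "last (inv_word t) = gen h"
      by (simp_all add: inv_t)
    ultimately show ?thesis
      using gh by (simp add: reduced_inv_word reduced_Cons_iff reduced_append_iff hd_append)
  qed
  have sf': "square_free g h (gen g # inv_word t @ ginv g # t)"
  proof -
    have sf_inv: "square_free g h (inv_word t @ [ginv g])"
      using square_free_inv_word[OF sf_t] by simp
    have sf_tl: "square_free g h t"
      using sf_t by (rule square_free_sublist) (simp add: sublist_Cons_right)
    have "square_free g h ([gen g] @ inv_word t @ [ginv g])"
    proof (rule square_free_append[OF _ sf_inv])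
      show "square_free g h [gen g]" by (simp add: square_free_if_length_less)
      show "square_free g h (drop (length [gen g] - 3) [gen g] @ take 3 (inv_word t @ [ginv g]))"
        using gh by (simp add: inv_t square_free_def square_words_def sublist_Cons_right)
    qed
    then have sf_g: "square_free g h (gen g # inv_word t @ [ginv g])" by simp
    have "square_free g h ((gen g # inv_word t @ [ginv g]) @ t)"
    proof (rule square_free_append[OF sf_g sf_tl])
      have "drop (length (gen g # inv_word t @ [ginv g]) - 3) (gen g # inv_word t @ [ginv g])
          = [ginv g, gen h, ginv g]"
        by (simp add: inv_t)
      moreover have "take 3 t = [ginv h, gen g, gen h]" by (simp add: t_def)
      ultimately show "square_free g h (drop (length (gen g # inv_word t @ [ginv g]) - 3)
          (gen g # inv_word t @ [ginv g]) @ take 3 t)"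
        using gh by (simp add: square_free_def square_words_def sublist_Cons_right)
    qed
    then show ?thesis by simp
  qed
  show ?case
  proof (intro exI conjI)
    show "iter_comm g h (Suc (Suc (Suc k))) = [gen g, ginv h, gen g, gen h]
        @ (gen g # inv_word m @ [ginv h, ginv g, gen h, ginv g, ginv h, gen g, gen h] @ m)
        @ [ginv g, ginv h, ginv g, gen h]"
      unfolding iter_comm_Suc_Suc_eq[OF wt red'] by (simp add: inv_t t_def)
  qed (simp_all only: iter_comm_Suc_Suc_eq[OF wt red'] red' sf')
qed

lemma square_free_iter_comm_wraparound:
  assumes gh: "g \<noteq> h" and n: "n \<ge> 1"
  shows "square_free g h (iter_comm g h n @ take 3 (iter_comm g h n))"
proof (cases "n = 1")
  case True
  with gh show ?thesis by (simp add: square_free_def square_words_def sublist_Cons_right)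
next
  case False
  then obtain k where "n = Suc (Suc k)" using n by (intro that[of "n - 2"]) simp
  with iter_comm_Suc_Suc_shape[OF gh] obtain m
    where w: "iter_comm g h n = [gen g, ginv h, gen g, gen h] @ m @ [ginv g, ginv h, ginv g, gen h]"
      and sf: "square_free g h (iter_comm g h n)"
    by blast
  show ?thesis
  proof (rule square_free_append[OF sf square_free_if_length_less])
    show "length (take 3 (iter_comm g h n)) < 4" by simp
    show "square_free g h (drop (length (iter_comm g h n) - 3) (iter_comm g h n)
        @ take 3 (take 3 (iter_comm g h n)))"
      using gh by (simp add: w square_free_def square_words_def sublist_Cons_right)
  qed
qed

theorem lemma3p11:
  fixes g h :: 'a and n :: nat
  assumes "g \<noteq> h" and "n \<ge> 1"
  shows "\<forall>u \<in> square_words g h. \<not> cyclic_subword u (iter_comm g h n)"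
  using not_cyclic_subword_if_square_free[OF square_free_iter_comm_wraparound[OF assms]] by blast

end
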